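(* Let $\beta\in(0,\tfrac12)$. Then the systems $\mathcal S=\{\sin(n+\beta)t\}_{n\in\mathbb Z}$ and $\mathcal C=\{\cos(n+\beta)t\}_{n\in\mathbb Z}$ are complete in $L_2(0,2\pi)$. *)

theory Defs
  imports "HOL-Analysis.Analysis"
begin

definition L2_02pi :: "(real \<Rightarrow> complex) \<Rightarrow> bool" where
  "L2_02pi f \<longleftrightarrow>
     f \<in> borel_measurable (lebesgue_on {0<..<2*pi}) \<and>
     integrable (lebesgue_on {0<..<2*pi}) (\<lambda>t. (norm (f t))^2)"

definition complete_L2_02pi :: "(int \<Rightarrow> real \<Rightarrow> complex) \<Rightarrow> bool" where
  "complete_L2_02pi \<phi> \<longleftrightarrow>
     (\<forall>f. L2_02pi f \<longrightarrow>
        (\<forall>\<epsilon>>0. \<exists>F c. finite F \<and>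
           (\<integral>t. (norm (f t - (\<Sum>n\<in>F. c n * \<phi> n t)))^2 \<partial>(lebesgue_on {0<..<2*pi})) < \<epsilon>))"

end

theory Submission
  imports Defs
begin

text \<open>
  Let u_n(t) = exp(i(n+\<beta>)t). This system is complete in L_2(0,2\<pi>): it is the Fourier system
  exp(int) multiplied by the unimodular weight exp(i\<beta>t), and trigonometric polynomials are dense
  (continuous functions with compact support in (0,2\<pi>) are dense, and Stone-Weierstrass on the
  unit circle approximates those uniformly). With d = exp(-2\<pi>i\<beta>) one has
  d u_n(2\<pi>-t) = exp(-i(n+\<beta>)t), so cos (n+\<beta>)t and sin (n+\<beta>)t are, up to constant factors, the
  images of u_n under T_s h(t) = h(t) + s h(2\<pi>-t) with s = d resp. s = -d. The reflection
  t \<mapsto> 2\<pi>-t preserves the measure, so T_s is bounded, and T_s T_(-s) = (1-s^2) id makes it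
  surjective when s^2 \<noteq> 1; a bounded surjection maps complete systems to complete systems.
  Here d^2 = exp(-4\<pi>i\<beta>) \<noteq> 1 precisely because 2\<beta> is not an integer.
\<close>

section \<open>Trigonometric polynomials\<close>

inductive trig_poly :: "(real \<Rightarrow> complex) \<Rightarrow> bool" where
  monomial: "trig_poly (\<lambda>t. c * cis (of_int n * t))"
| add: "trig_poly p \<Longrightarrow> trig_poly q \<Longrightarrow> trig_poly (\<lambda>t. p t + q t)"

lemma trig_poly_mult:
  assumes "trig_poly p" "trig_poly q"
  shows "trig_poly (\<lambda>t. p t * q t)"
  using assms
proof (induction arbitrary: q rule: trig_poly.induct)
  case (monomial c n)
  then show ?case
  proof (induction rule: trig_poly.induct)
    case (monomial d m)
    have "(\<lambda>t. (c * d) * cis (of_int (n + m) * t)) = (\<lambda>t. c * cis (of_int n * t) * (d * cis (of_int m * t)))"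
      by (simp add: fun_eq_iff cis_mult algebra_simps)
    then show ?case
      using trig_poly.monomial by metis
  next
    case (add p q)
    then show ?case
      using trig_poly.add[OF add.IH] by (simp add: distrib_left)
  qed
next
  case (add p1 p2)
  then show ?case
    using trig_poly.add[OF add.IH[OF add.prems]] by (simp add: distrib_right)
qed

lemma trig_poly_const: "trig_poly (\<lambda>t. c)"
  using trig_poly.monomial[of c 0] by simp

lemma trig_poly_cos: "trig_poly (\<lambda>t. complex_of_real (cos t))"
proof -
  have "trig_poly (\<lambda>t. (1/2) * cis (of_int 1 * t) + (1/2) * cis (of_int (-1) * t))"
    by (intro trig_poly.intros)
  also have "(\<lambda>t. (1/2) * cis (of_int 1 * t) + (1/2) * cis (of_int (-1) * t)) = (\<lambda>t. complex_of_real (cos t))"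
    by (simp add: fun_eq_iff complex_eq_iff)
  finally show ?thesis .
qed

lemma trig_poly_sin: "trig_poly (\<lambda>t. complex_of_real (sin t))"
proof -
  have "trig_poly (\<lambda>t. (-\<i>/2) * cis (of_int 1 * t) + (\<i>/2) * cis (of_int (-1) * t))"
    by (intro trig_poly.intros)
  also have "(\<lambda>t. (-\<i>/2) * cis (of_int 1 * t) + (\<i>/2) * cis (of_int (-1) * t)) = (\<lambda>t. complex_of_real (sin t))"
    by (simp add: fun_eq_iff complex_eq_iff)
  finally show ?thesis .
qed

lemma bounded_linear_complex_decomp:
  assumes "bounded_linear r"
  shows "r z = Re z *\<^sub>R r 1 + Im z *\<^sub>R r \<i>"
proof -
  interpret bounded_linear r by fact
  have "z = Re z *\<^sub>R 1 + Im z *\<^sub>R \<i>"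
    by (simp add: complex_eq_iff)
  then have "r z = r (Re z *\<^sub>R 1 + Im z *\<^sub>R \<i>)"
    by (rule arg_cong)
  then show ?thesis
    by (simp add: add scaleR)
qed

lemma trig_poly_real_polynomial_function:
  "real_polynomial_function r \<Longrightarrow> trig_poly (\<lambda>t. complex_of_real (r (cis t)))"
proof (induction rule: real_polynomial_function.induct)
  case (linear r)
  have "trig_poly (\<lambda>t. complex_of_real (r 1) * complex_of_real (cos t)
                     + complex_of_real (r \<i>) * complex_of_real (sin t))"
    by (intro trig_poly.add trig_poly_mult trig_poly_const trig_poly_cos trig_poly_sin)
  then show ?case
    by (simp add: bounded_linear_complex_decomp[OF linear, of "cis _"] mult.commute)
next
  case (const c)
  show ?case by (rule trig_poly_const)
next
  case (add f g)
  then show ?case by (simp add: trig_poly.add)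
next
  case (mult f g)
  then show ?case by (simp add: trig_poly_mult)
qed

lemma trig_poly_polynomial_function:
  assumes "polynomial_function q"
  shows "trig_poly (\<lambda>t. q (cis t))"
proof -
  have "real_polynomial_function (Re \<circ> q)" "real_polynomial_function (Im \<circ> q)"
    using assms bounded_linear_Re bounded_linear_Im by (auto simp: polynomial_function_def)
  then have "trig_poly (\<lambda>t. complex_of_real (Re (q (cis t))) + \<i> * complex_of_real (Im (q (cis t))))"
    by (auto intro!: trig_poly.add trig_poly_mult trig_poly_const
          dest!: trig_poly_real_polynomial_function)
  also have "(\<lambda>t. complex_of_real (Re (q (cis t))) + \<i> * complex_of_real (Im (q (cis t)))) = (\<lambda>t. q (cis t))"
    by (simp add: fun_eq_iff complex_eq_iff)
  finally show ?thesis .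
qed

lemma trig_poly_finite_sum:
  assumes "trig_poly p"
  obtains F c where "finite F" "p = (\<lambda>t. \<Sum>n\<in>F. c n * cis (of_int n * t))"
  using assms
proof (induction arbitrary: thesis rule: trig_poly.induct)
  case (monomial c n)
  show ?case
    by (rule monomial.prems[of "{n}" "\<lambda>_. c"]) auto
next
  case (add p q)
  obtain F1 c1 where F1: "finite F1" "p = (\<lambda>t. \<Sum>n\<in>F1. c1 n * cis (of_int n * t))"
    using add.IH(1) by blast
  obtain F2 c2 where F2: "finite F2" "q = (\<lambda>t. \<Sum>n\<in>F2. c2 n * cis (of_int n * t))"
    using add.IH(2) by blast
  define c where "c n = (if n \<in> F1 then c1 n else 0) + (if n \<in> F2 then c2 n else 0)" for n
  have "(\<Sum>n\<in>F1 \<union> F2. c n * cis (of_int n * t))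
      = (\<Sum>n\<in>F1. c1 n * cis (of_int n * t)) + (\<Sum>n\<in>F2. c2 n * cis (of_int n * t))" for t
  proof -
    have "(\<Sum>n\<in>F1 \<union> F2. c n * cis (of_int n * t))
        = (\<Sum>n\<in>F1 \<union> F2. if n \<in> F1 then c1 n * cis (of_int n * t) else 0)
          + (\<Sum>n\<in>F1 \<union> F2. if n \<in> F2 then c2 n * cis (of_int n * t) else 0)"
      unfolding sum.distrib[symmetric] by (rule sum.cong) (auto simp: c_def distrib_right)
    also have "\<dots> = (\<Sum>n\<in>F1. c1 n * cis (of_int n * t)) + (\<Sum>n\<in>F2. c2 n * cis (of_int n * t))"
      using F1(1) F2(1) by (simp add: Int_absorb1 Int_absorb2 flip: sum.inter_restrict)
    finally show ?thesis .
  qed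
  then show ?case
    using F1 F2 by (intro add.prems[of "F1 \<union> F2" c]) auto
qed

lemma Arg2pi_eq_Arg: "Arg2pi z = (if 0 \<le> Arg z then Arg z else Arg z + 2*pi)"
proof (cases "z = 0")
  case True
  then show ?thesis by (simp add: Arg_zero)
next
  case False
  have "exp (\<i> * complex_of_real (Arg z + 2*pi)) = exp (\<i> * complex_of_real (Arg z))"
    by (simp add: algebra_simps exp_add)
  then show ?thesis
    using Arg_eq[OF False] mpi_less_Arg[of z] Arg_le_pi[of z] False
    by (intro Arg2pi_unique[of "norm z"]) auto
qed

lemma trig_poly_uniform_approx:
  fixes g :: "real \<Rightarrow> complex"
  assumes cont: "continuous_on UNIV g" and "0 < a" "b < 2*pi"
    and supp: "\<And>t. t \<notin> {a..b} \<Longrightarrow> g t = 0" and "0 < \<delta>"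
  obtains p where "trig_poly p" "\<And>t. t \<in> {0..<2*pi} \<Longrightarrow> norm (g t - p t) < \<delta>"
proof -
  define h where "h z = g (Arg2pi z)" for z
  \<comment> \<open>Since g vanishes near 0 and 2\<pi>, h also equals the following expression in Arg, which is
    continuous at 1, where Arg2pi jumps.\<close>
  have h_Arg: "h z = g (Arg z) + g (Arg z + 2*pi)" for z
    using supp[of "Arg z"] supp[of "Arg z + 2*pi"] Arg_le_pi[of z] \<open>0 < a\<close> \<open>b < 2*pi\<close>
    by (auto simp: h_def Arg2pi_eq_Arg)
  have g_cont: "isCont g x" for x
    using cont by (simp add: continuous_on_eq_continuous_at)
  have "isCont h z" if "z \<in> sphere 0 1" for z
  proof (cases "z \<in> \<real>\<^sub>\<le>\<^sub>0")
    case False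
    then have "isCont Arg z"
      by (rule continuous_at_Arg)
    then have "isCont (\<lambda>z. g (Arg z) + g (Arg z + 2*pi)) z"
      by (intro continuous_intros isCont_o2[OF _ g_cont])
    then show ?thesis
      by (simp add: h_Arg[abs_def])
  next
    case True
    moreover have "z \<noteq> 0"
      using that by auto
    ultimately have "z \<notin> \<real>\<^sub>\<ge>\<^sub>0"
      by (auto simp: complex_nonpos_Reals_iff complex_nonneg_Reals_iff complex_eq_iff)
    then show ?thesis
      unfolding h_def by (intro isCont_o2[OF continuous_at_Arg2pi g_cont])
  qed
  then have "continuous_on (sphere 0 1) h"
    by (intro continuous_at_imp_continuous_on ballI)
  then obtain q where q: "polynomial_function q" and q_approx: "\<forall>z\<in>sphere 0 1. norm (h z - q z) < \<delta>"
    using Stone_Weierstrass_polynomial_function[OF compact_sphere _ \<open>0 < \<delta>\<close>] by blast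
  show ?thesis
  proof
    show "trig_poly (\<lambda>t. q (cis t))"
      using q by (rule trig_poly_polynomial_function)
    fix t :: real
    assume "t \<in> {0..<2*pi}"
    then have "h (cis t) = g t"
      by (simp add: h_def cis_conv_exp Arg2pi_exp)
    then show "norm (g t - q (cis t)) < \<delta>"
      using q_approx by (metis mem_sphere_0 norm_cis)
  qed
qed

section \<open>Square integrals\<close>

definition L2_norm_sq :: "'a measure \<Rightarrow> ('a \<Rightarrow> complex) \<Rightarrow> ennreal" where
  "L2_norm_sq M h = (\<integral>\<^sup>+x. ennreal ((norm (h x))\<^sup>2) \<partial>M)"

lemma L2_norm_sq_add_le:
  assumes [measurable]: "f \<in> borel_measurable M" "g \<in> borel_measurable M"
  shows "L2_norm_sq M (\<lambda>x. f x + g x) \<le> 2 * L2_norm_sq M f + 2 * L2_norm_sq M g"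
proof -
  have "ennreal ((norm (a + b))\<^sup>2) \<le> 2 * ennreal ((norm a)\<^sup>2) + 2 * ennreal ((norm b)\<^sup>2)"
    for a b :: complex
  proof -
    have "(norm (a + b))\<^sup>2 \<le> (norm a + norm b)\<^sup>2"
      by (simp add: norm_triangle_ineq power_mono)
    also have "\<dots> \<le> 2 * (norm a)\<^sup>2 + 2 * (norm b)\<^sup>2"
      using zero_le_power2[of "norm a - norm b"] by (simp add: power2_eq_square algebra_simps)
    finally show ?thesis
      by (simp flip: ennreal_numeral ennreal_plus add: ennreal_mult[symmetric] ennreal_leI)
  qed
  then have "L2_norm_sq M (\<lambda>x. f x + g x)
      \<le> (\<integral>\<^sup>+x. 2 * ennreal ((norm (f x))\<^sup>2) + 2 * ennreal ((norm (g x))\<^sup>2) \<partial>M)"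
    unfolding L2_norm_sq_def
    by (intro nn_integral_mono)
  also have "\<dots> = 2 * L2_norm_sq M f + 2 * L2_norm_sq M g"
    unfolding L2_norm_sq_def by (simp add: nn_integral_add nn_integral_cmult)
  finally show ?thesis .
qed

lemma L2_norm_sq_add_less:
  assumes "f \<in> borel_measurable M" "g \<in> borel_measurable M"
    and "L2_norm_sq M f < ennreal (e/4)" "L2_norm_sq M g < ennreal (e/4)"
  shows "L2_norm_sq M (\<lambda>x. f x + g x) < ennreal e"
proof -
  have "0 < ennreal (e/4)"
    using assms(3) by (rule le_less_trans[OF zero_le])
  then have "0 < e"
    by simp
  have "L2_norm_sq M (\<lambda>x. f x + g x) \<le> 2 * L2_norm_sq M f + 2 * L2_norm_sq M g"
    using assms(1,2) by (rule L2_norm_sq_add_le)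
  also have "\<dots> < 2 * ennreal (e/4) + 2 * ennreal (e/4)"
    using assms(3,4) by (intro add_strict_mono ennreal_mult_strict_left_mono) auto
  also have "\<dots> = ennreal e"
    using \<open>0 < e\<close> by (simp flip: ennreal_numeral ennreal_plus add: ennreal_mult[symmetric])
  finally show ?thesis .
qed

lemma L2_norm_sq_diff_less:
  assumes "f \<in> borel_measurable M" "g \<in> borel_measurable M" "h \<in> borel_measurable M"
    and "L2_norm_sq M (\<lambda>x. f x - g x) < ennreal (e/4)" "L2_norm_sq M (\<lambda>x. g x - h x) < ennreal (e/4)"
  shows "L2_norm_sq M (\<lambda>x. f x - h x) < ennreal e"
  using L2_norm_sq_add_less[of "\<lambda>x. f x - g x" M "\<lambda>x. g x - h x"] assms by simp

lemma L2_norm_sq_cmult: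
  assumes "h \<in> borel_measurable M"
  shows "L2_norm_sq M (\<lambda>x. a * h x) = ennreal ((norm a)\<^sup>2) * L2_norm_sq M h"
  unfolding L2_norm_sq_def using assms
  by (subst nn_integral_cmult[symmetric]) (auto simp: norm_mult power_mult_distrib ennreal_mult)

lemma L2_norm_sq_unimodular_mult:
  assumes "\<And>x. norm (w x) = 1"
  shows "L2_norm_sq M (\<lambda>x. w x * h x) = L2_norm_sq M h"
  unfolding L2_norm_sq_def by (simp add: norm_mult assms)

lemma L2_norm_sq_le_uniform:
  assumes "\<And>x. x \<in> space M \<Longrightarrow> norm (h x) \<le> \<delta>"
  shows "L2_norm_sq M h \<le> ennreal (\<delta>\<^sup>2) * emeasure M (space M)"
proof -
  have "L2_norm_sq M h \<le> (\<integral>\<^sup>+x. ennreal (\<delta>\<^sup>2) \<partial>M)"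
    unfolding L2_norm_sq_def
    using assms by (intro nn_integral_mono ennreal_leI power_mono) auto
  then show ?thesis
    by simp
qed

definition truncate_norm :: "real \<Rightarrow> 'a::real_normed_vector \<Rightarrow> 'a" where
  "truncate_norm K z = (K / max K (norm z)) *\<^sub>R z"

lemma norm_truncate_norm_le: "0 < K \<Longrightarrow> norm (truncate_norm K z) \<le> K"
  by (auto simp: truncate_norm_def max_def field_simps)

lemma truncate_norm_eq_self: "norm z \<le> K \<Longrightarrow> truncate_norm K z = z"
  by (cases "K = norm z") (auto simp: truncate_norm_def max_def)

lemma norm_diff_truncate_norm_le: "0 < K \<Longrightarrow> norm (z - truncate_norm K z) \<le> norm z"
proof -
  assume "0 < K"
  then have r: "0 \<le> K / max K (norm z)" "K / max K (norm z) \<le> 1"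
    by (auto simp: divide_le_eq)
  have "z - truncate_norm K z = (1 - K / max K (norm z)) *\<^sub>R z"
    by (simp add: truncate_norm_def algebra_simps)
  then show ?thesis
    using r by (simp add: mult_left_le_one_le)
qed

lemma continuous_on_truncate_norm: "0 < K \<Longrightarrow> continuous_on UNIV (truncate_norm K)"
  unfolding truncate_norm_def by (intro continuous_intros) auto

lemma L2_norm_sq_truncate_norm_less:
  assumes [measurable]: "f \<in> borel_measurable M" and "L2_norm_sq M f < \<infinity>" and "0 < e"
  obtains K where "0 < K" "L2_norm_sq M (\<lambda>x. f x - truncate_norm K (f x)) < ennreal e"
proof -
  define u where "u i x = ennreal ((norm (f x - truncate_norm (real (Suc i)) (f x)))\<^sup>2)" for i x
  have "(\<lambda>i. \<integral>\<^sup>+x. u i x \<partial>M) \<longlonglongrightarrow> (\<integral>\<^sup>+x. 0 \<partial>M)"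
  proof (rule nn_integral_dominated_convergence[where w="\<lambda>x. ennreal ((norm (f x))\<^sup>2)"])
    show "AE x in M. u i x \<le> ennreal ((norm (f x))\<^sup>2)" for i
      unfolding u_def by (intro AE_I2 ennreal_leI power_mono norm_diff_truncate_norm_le) auto
    show "(\<integral>\<^sup>+x. ennreal ((norm (f x))\<^sup>2) \<partial>M) < \<infinity>"
      using assms(2) by (simp add: L2_norm_sq_def)
    show "AE x in M. (\<lambda>i. u i x) \<longlonglongrightarrow> 0"
    proof (rule AE_I2)
      fix x
      obtain N :: nat where "norm (f x) \<le> real N"
        using real_arch_simple by blast
      then have "eventually (\<lambda>i. u i x = 0) sequentially"
        by (intro eventually_sequentiallyI[of N]) (simp add: u_def truncate_norm_eq_self)
      then show "(\<lambda>i. u i x) \<longlonglongrightarrow> 0"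
        by (rule tendsto_eventually)
    qed
  qed (auto simp: u_def truncate_norm_def)
  then have "eventually (\<lambda>i. (\<integral>\<^sup>+x. u i x \<partial>M) < ennreal e) sequentially"
    using \<open>0 < e\<close> by (intro order_tendstoD(2)) auto
  then obtain i where "(\<integral>\<^sup>+x. u i x \<partial>M) < ennreal e"
    by (auto simp: eventually_sequentially)
  then show ?thesis
    by (intro that[of "real (Suc i)"]) (auto simp: L2_norm_sq_def u_def)
qed

lemma L2_norm_sq_bounded_convergence:
  assumes fin: "emeasure M (space M) < \<infinity>"
    and [measurable]: "\<And>n. G n \<in> borel_measurable M" "f \<in> borel_measurable M"
    and G_bound: "\<And>n x. norm (G n x) \<le> K" and f_bound: "\<And>x. norm (f x) \<le> K"
    and lim: "AE x in M. (\<lambda>n. G n x) \<longlonglongrightarrow> f x"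
  shows "(\<lambda>n. L2_norm_sq M (\<lambda>x. f x - G n x)) \<longlonglongrightarrow> 0"
proof -
  have "(\<lambda>n. \<integral>\<^sup>+x. ennreal ((norm (f x - G n x))\<^sup>2) \<partial>M) \<longlonglongrightarrow> (\<integral>\<^sup>+x. 0 \<partial>M)"
  proof (rule nn_integral_dominated_convergence[where w="\<lambda>x. ennreal ((2*K)\<^sup>2)"])
    show "AE x in M. ennreal ((norm (f x - G n x))\<^sup>2) \<le> ennreal ((2*K)\<^sup>2)" for n
    proof (rule AE_I2)
      fix x
      have "norm (f x - G n x) \<le> 2 * K"
        using norm_triangle_ineq4[of "f x" "G n x"] f_bound[of x] G_bound[of n x] by linarith
      then show "ennreal ((norm (f x - G n x))\<^sup>2) \<le> ennreal ((2*K)\<^sup>2)"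
        by (intro ennreal_leI power_mono) auto
    qed
    show "(\<integral>\<^sup>+x. ennreal ((2*K)\<^sup>2) \<partial>M) < \<infinity>"
      using fin by (simp add: ennreal_mult_less_top)
    show "AE x in M. (\<lambda>n. ennreal ((norm (f x - G n x))\<^sup>2)) \<longlonglongrightarrow> 0"
      using lim
    proof eventually_elim
      case (elim x)
      then have "(\<lambda>n. (norm (f x - G n x))\<^sup>2) \<longlonglongrightarrow> (norm (f x - f x))\<^sup>2"
        by (intro tendsto_intros)
      then show ?case
        using tendsto_ennrealI by fastforce
    qed
  qed auto
  then show ?thesis
    by (simp add: L2_norm_sq_def)
qed

section \<open>Density in L_2(0, 2\<pi>)\<close>

abbreviation lebesgue_02pi :: "real measure" where
  "lebesgue_02pi \<equiv> lebesgue_on {0<..<2*pi}"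

lemma L2_02pi_iff: "L2_02pi f \<longleftrightarrow> f \<in> borel_measurable lebesgue_02pi \<and> L2_norm_sq lebesgue_02pi f < \<infinity>"
proof -
  have "(\<lambda>t. (norm (f t))\<^sup>2) \<in> borel_measurable lebesgue_02pi"
    if [measurable]: "f \<in> borel_measurable lebesgue_02pi"
    by measurable
  then show ?thesis
    by (auto simp: L2_02pi_def integrable_iff_bounded L2_norm_sq_def)
qed

lemma emeasure_lebesgue_02pi: "emeasure lebesgue_02pi {0<..<2*pi} = ennreal (2*pi)"
  by (simp add: emeasure_restrict_space)

lemma continuous_imp_measurable_02pi: "continuous_on UNIV h \<Longrightarrow> h \<in> borel_measurable lebesgue_02pi"
  by (rule continuous_imp_measurable_on_sets_lebesgue) (auto intro: continuous_on_subset)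

lemma measurable_reflect_02pi:
  assumes "h \<in> borel_measurable lebesgue_02pi"
  shows "(\<lambda>t. h (2*pi - t)) \<in> borel_measurable lebesgue_02pi"
proof -
  have "(\<lambda>t::real. 2*pi + (\<Sum>j\<in>Basis. (-1 * (t \<bullet> j)) *\<^sub>R j)) \<in> lebesgue \<rightarrow>\<^sub>M lebesgue"
    by (rule lebesgue_affine_measurable) simp
  then have "(\<lambda>t::real. 2*pi - t) \<in> lebesgue \<rightarrow>\<^sub>M lebesgue"
    by simp
  then have "(\<lambda>t::real. 2*pi - t) \<in> lebesgue_02pi \<rightarrow>\<^sub>M lebesgue_02pi"
    by (rule measurable_restrict_space3) auto
  from measurable_compose[OF this assms] show ?thesis
    by (simp add: o_def)
qed

lemma L2_norm_sq_reflect_02pi: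
  assumes "h \<in> borel_measurable lebesgue_02pi"
  shows "L2_norm_sq lebesgue_02pi (\<lambda>t. h (2*pi - t)) = L2_norm_sq lebesgue_02pi h"
proof -
  let ?f = "\<lambda>t. ennreal ((norm (h t))\<^sup>2) * indicator {0<..<2*pi} t"
  have "(\<lambda>t. ennreal ((norm (h t))\<^sup>2)) \<in> borel_measurable lebesgue_02pi"
    using assms by measurable
  then have "?f \<in> borel_measurable lebesgue"
    by (subst (asm) borel_measurable_restrict_space_iff_ennreal) auto
  from nn_integral_real_affine_lebesgue[OF this, of "-1" "2*pi"]
  have "(\<integral>\<^sup>+t. ?f t \<partial>lebesgue) = (\<integral>\<^sup>+t. ?f (2*pi - t) \<partial>lebesgue)"
    by simp
  also have "\<dots> = (\<integral>\<^sup>+t. ennreal ((norm (h (2*pi - t)))\<^sup>2) * indicator {0<..<2*pi} t \<partial>lebesgue)"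
    by (intro nn_integral_cong) (auto simp: indicator_def)
  finally show ?thesis
    by (simp add: L2_norm_sq_def nn_integral_restrict_space)
qed

definition plateau :: "nat \<Rightarrow> real \<Rightarrow> real" where
  "plateau n t = max 0 (min 1 (min (real (Suc n) * t - 1) (real (Suc n) * (2*pi - t) - 1)))"

lemma plateau_bounds: "0 \<le> plateau n t" "plateau n t \<le> 1"
  by (auto simp: plateau_def)

lemma continuous_on_plateau: "continuous_on UNIV (plateau n)"
  unfolding plateau_def by (intro continuous_intros)

lemma plateau_eq_0:
  assumes "t \<notin> {1 / real (Suc n) .. 2*pi - 1 / real (Suc n)}"
  shows "plateau n t = 0"
proof -
  have "real (Suc n) * t < 1 \<or> real (Suc n) * (2*pi - t) < 1"
    using assms by (auto simp: field_simps)
  then show ?thesis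
    by (auto simp: plateau_def)
qed

lemma plateau_tendsto_1:
  assumes "t \<in> {0<..<2*pi}"
  shows "(\<lambda>n. plateau n t) \<longlonglongrightarrow> 1"
proof (rule tendsto_eventually)
  have "eventually (\<lambda>n. 2 / t \<le> real n \<and> 2 / (2*pi - t) \<le> real n) sequentially"
    using filterlim_real_sequentially by (simp add: filterlim_at_top eventually_conj)
  then show "eventually (\<lambda>n. plateau n t = 1) sequentially"
  proof (rule eventually_mono)
    fix n
    assume "2 / t \<le> real n \<and> 2 / (2*pi - t) \<le> real n"
    then have "2 \<le> real n * t" "2 \<le> real n * (2*pi - t)"
      using assms by (auto simp: divide_le_eq mult.commute)
    moreover have "real n * t \<le> real (Suc n) * t" "real n * (2*pi - t) \<le> real (Suc n) * (2*pi - t)"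
      using assms by (intro mult_right_mono; simp)+
    ultimately show "plateau n t = 1"
      by (simp add: plateau_def)
  qed
qed

lemma bounded_measurable_02pi_AE_limit:
  fixes f :: "real \<Rightarrow> complex"
  assumes [measurable]: "f \<in> borel_measurable lebesgue_02pi" and "0 < K" and f_bound: "\<And>t. norm (f t) \<le> K"
  obtains G where "\<And>n. continuous_on UNIV (G n)" "\<And>n t. norm (G n t) \<le> K"
    "\<And>n t. t \<notin> {1 / real (Suc n) .. 2*pi - 1 / real (Suc n)} \<Longrightarrow> G n t = 0"
    "AE t in lebesgue_02pi. (\<lambda>n. G n t) \<longlonglongrightarrow> f t"
proof -
  have "f measurable_on {0<..<2*pi}"
    by (simp add: measurable_on_iff_borel_measurable)
  then obtain N g where "negligible N" and g_cont: "\<And>n. continuous_on UNIV (g n)"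
    and g_lim: "\<And>t. t \<notin> N \<Longrightarrow> (\<lambda>n. g n t) \<longlonglongrightarrow> (if t \<in> {0<..<2*pi} then f t else 0)"
    unfolding measurable_on_def by blast
  define G where "G n t = complex_of_real (plateau n t) * truncate_norm K (g n t)" for n t
  have trunc_cont: "isCont (truncate_norm K) z" for z :: complex
    using continuous_on_truncate_norm[OF \<open>0 < K\<close>, where 'a=complex] by (simp add: continuous_on_eq_continuous_at)
  have "continuous_on UNIV (G n)" for n
    unfolding G_def using continuous_on_plateau g_cont
    by (intro continuous_intros continuous_on_compose2[OF continuous_on_truncate_norm[OF \<open>0 < K\<close>]]) auto
  moreover have "norm (G n t) \<le> K" for n t
  proof -
    have "norm (G n t) = plateau n t * norm (truncate_norm K (g n t))"
      using plateau_bounds[of n t] by (simp add: G_def norm_mult)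
    also have "\<dots> \<le> 1 * K"
      using plateau_bounds[of n t] norm_truncate_norm_le[OF \<open>0 < K\<close>] by (intro mult_mono) auto
    finally show ?thesis
      by simp
  qed
  moreover have "G n t = 0" if "t \<notin> {1 / real (Suc n) .. 2*pi - 1 / real (Suc n)}" for n t
    using plateau_eq_0[OF that] by (simp add: G_def)
  moreover have "AE t in lebesgue. t \<notin> N"
    using \<open>negligible N\<close> by (auto simp: eventually_ae_filter_negligible)
  then have "AE t in lebesgue_02pi. t \<notin> N \<and> t \<in> {0<..<2*pi}"
    by (auto simp: AE_restrict_space_iff elim: eventually_mono)
  then have "AE t in lebesgue_02pi. (\<lambda>n. G n t) \<longlonglongrightarrow> f t"
  proof eventually_elim
    case (elim t)
    then have "(\<lambda>n. g n t) \<longlonglongrightarrow> f t"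
      using g_lim[of t] by simp
    then have "(\<lambda>n. truncate_norm K (g n t)) \<longlonglongrightarrow> truncate_norm K (f t)"
      by (rule isCont_tendsto_compose[OF trunc_cont])
    then have "(\<lambda>n. G n t) \<longlonglongrightarrow> complex_of_real 1 * truncate_norm K (f t)"
      unfolding G_def using plateau_tendsto_1 elim by (intro tendsto_intros) auto
    then show ?case
      using truncate_norm_eq_self[OF f_bound] by simp
  qed
  ultimately show ?thesis
    using that by blast
qed

lemma L2_approx_bounded_by_compact_support:
  assumes [measurable]: "f \<in> borel_measurable lebesgue_02pi"
    and "0 < K" and f_bound: "\<And>t. norm (f t) \<le> K" and "0 < e"
  obtains g a b where "continuous_on UNIV g" "0 < a" "b < 2*pi" "\<And>t. t \<notin> {a..b} \<Longrightarrow> g t = 0"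
    "L2_norm_sq lebesgue_02pi (\<lambda>t. f t - g t) < ennreal e"
proof -
  obtain G where G_cont: "\<And>n. continuous_on UNIV (G n)" and G_bound: "\<And>n t. norm (G n t) \<le> K"
    and G_supp: "\<And>n t. t \<notin> {1 / real (Suc n) .. 2*pi - 1 / real (Suc n)} \<Longrightarrow> G n t = 0"
    and G_lim: "AE t in lebesgue_02pi. (\<lambda>n. G n t) \<longlonglongrightarrow> f t"
    using bounded_measurable_02pi_AE_limit[OF assms(1-3)] by blast
  have "(\<lambda>n. L2_norm_sq lebesgue_02pi (\<lambda>t. f t - G n t)) \<longlonglongrightarrow> 0"
    using emeasure_lebesgue_02pi G_cont continuous_imp_measurable_02pi
    by (intro L2_norm_sq_bounded_convergence[OF _ _ _ G_bound f_bound G_lim]) auto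
  then have "eventually (\<lambda>n. L2_norm_sq lebesgue_02pi (\<lambda>t. f t - G n t) < ennreal e) sequentially"
    using \<open>0 < e\<close> by (intro order_tendstoD(2)) auto
  then obtain n where "L2_norm_sq lebesgue_02pi (\<lambda>t. f t - G n t) < ennreal e"
    by (auto simp: eventually_sequentially)
  then show ?thesis
    using G_cont G_supp by (intro that[of "G n" "1 / real (Suc n)" "2*pi - 1 / real (Suc n)"]) auto
qed

lemma L2_02pi_approx_by_compact_support:
  assumes "L2_02pi f" and "0 < e"
  obtains g a b where "continuous_on UNIV g" "0 < a" "b < 2*pi" "\<And>t. t \<notin> {a..b} \<Longrightarrow> g t = 0"
    "L2_norm_sq lebesgue_02pi (\<lambda>t. f t - g t) < ennreal e"
proof -
  have f_meas [measurable]: "f \<in> borel_measurable lebesgue_02pi"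
    and f_fin: "L2_norm_sq lebesgue_02pi f < \<infinity>"
    using assms(1) by (auto simp: L2_02pi_iff)
  obtain K where "0 < K" and trunc: "L2_norm_sq lebesgue_02pi (\<lambda>t. f t - truncate_norm K (f t)) < ennreal (e/4)"
    using L2_norm_sq_truncate_norm_less[OF f_meas f_fin, of "e/4"] \<open>0 < e\<close> by auto
  have trunc_meas [measurable]: "(\<lambda>t. truncate_norm K (f t)) \<in> borel_measurable lebesgue_02pi"
    by (simp add: truncate_norm_def)
  have "0 < e/4"
    using \<open>0 < e\<close> by simp
  then obtain g a b where g_cont: "continuous_on UNIV g" and "0 < a" "b < 2*pi" and g_supp: "\<And>t. t \<notin> {a..b} \<Longrightarrow> g t = 0"
    and approx: "L2_norm_sq lebesgue_02pi (\<lambda>t. truncate_norm K (f t) - g t) < ennreal (e/4)"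
    using L2_approx_bounded_by_compact_support[OF trunc_meas \<open>0 < K\<close> norm_truncate_norm_le[OF \<open>0 < K\<close>]]
    by blast
  have "L2_norm_sq lebesgue_02pi (\<lambda>t. f t - g t) < ennreal e"
    using L2_norm_sq_diff_less[OF f_meas trunc_meas continuous_imp_measurable_02pi[OF g_cont] trunc approx] .
  then show ?thesis
    using that[OF g_cont \<open>0 < a\<close> \<open>b < 2*pi\<close> g_supp] by blast
qed

section \<open>Complete systems\<close>

text \<open>
  A variant of complete_L2_02pi with the error measured by a nonnegative integral; unlike the
  Bochner integral, it has no junk value 0 for non-integrable functions.
\<close>
definition L2_dense_span :: "(int \<Rightarrow> real \<Rightarrow> complex) \<Rightarrow> bool" where
  "L2_dense_span \<phi> \<longleftrightarrow> (\<forall>f e. L2_02pi f \<longrightarrow> 0 < e \<longrightarrow>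
     (\<exists>F c. finite F \<and> L2_norm_sq lebesgue_02pi (\<lambda>t. f t - (\<Sum>n\<in>F. c n * \<phi> n t)) < ennreal e))"

lemma L2_dense_span_cis: "L2_dense_span (\<lambda>n t. cis (of_int n * t))"
  unfolding L2_dense_span_def
proof (intro allI impI)
  fix f :: "real \<Rightarrow> complex" and e :: real
  assume "L2_02pi f" "0 < e"
  then have f_meas: "f \<in> borel_measurable lebesgue_02pi"
    by (simp add: L2_02pi_iff)
  obtain g a b where g_cont: "continuous_on UNIV g" and "0 < a" "b < 2*pi" "\<And>t. t \<notin> {a..b} \<Longrightarrow> g t = 0"
    and fg: "L2_norm_sq lebesgue_02pi (\<lambda>t. f t - g t) < ennreal (e/4)"
    using L2_02pi_approx_by_compact_support[OF \<open>L2_02pi f\<close>, of "e/4"] \<open>0 < e\<close> by auto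
  define \<delta> where "\<delta> = sqrt (e / (16*pi))"
  have "0 < \<delta>"
    using \<open>0 < e\<close> by (simp add: \<delta>_def)
  then obtain p where "trig_poly p" and p_approx: "\<And>t. t \<in> {0..<2*pi} \<Longrightarrow> norm (g t - p t) < \<delta>"
    using trig_poly_uniform_approx[OF g_cont \<open>0 < a\<close> \<open>b < 2*pi\<close>] \<open>\<And>t. t \<notin> {a..b} \<Longrightarrow> g t = 0\<close>
    by blast
  obtain F c where "finite F" and p: "p = (\<lambda>t. \<Sum>n\<in>F. c n * cis (of_int n * t))"
    using trig_poly_finite_sum[OF \<open>trig_poly p\<close>] by blast
  have "L2_norm_sq lebesgue_02pi (\<lambda>t. g t - p t) \<le> ennreal (\<delta>\<^sup>2) * ennreal (2*pi)"
    using L2_norm_sq_le_uniform[of lebesgue_02pi "\<lambda>t. g t - p t" \<delta>] p_approx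
    by (auto simp: emeasure_lebesgue_02pi less_imp_le)
  also have "\<dots> < ennreal (e/4)"
    using \<open>0 < e\<close> by (simp add: \<delta>_def ennreal_less_iff flip: ennreal_mult)
  finally have gp: "L2_norm_sq lebesgue_02pi (\<lambda>t. g t - p t) < ennreal (e/4)" .
  have p_meas: "p \<in> borel_measurable lebesgue_02pi"
    unfolding p by (intro continuous_imp_measurable_02pi continuous_intros)
  have "L2_norm_sq lebesgue_02pi (\<lambda>t. f t - p t) < ennreal e"
    using L2_norm_sq_diff_less[OF f_meas continuous_imp_measurable_02pi[OF g_cont] p_meas fg gp] .
  then show "\<exists>F c. finite F \<and> L2_norm_sq lebesgue_02pi (\<lambda>t. f t - (\<Sum>n\<in>F. c n * cis (of_int n * t))) < ennreal e"
    using \<open>finite F\<close> unfolding p by blast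
qed

lemma L2_dense_span_unimodular_mult:
  assumes dense: "L2_dense_span \<phi>"
    and w_meas: "w \<in> borel_measurable lebesgue_02pi" and w_norm: "\<And>t. norm (w t) = 1"
  shows "L2_dense_span (\<lambda>n t. w t * \<phi> n t)"
  unfolding L2_dense_span_def
proof (intro allI impI)
  fix f :: "real \<Rightarrow> complex" and e :: real
  assume "L2_02pi f" "0 < e"
  then have f_meas: "f \<in> borel_measurable lebesgue_02pi" and "L2_norm_sq lebesgue_02pi f < \<infinity>"
    by (auto simp: L2_02pi_iff)
  moreover have "L2_norm_sq lebesgue_02pi (\<lambda>t. f t / w t) = L2_norm_sq lebesgue_02pi f"
    by (simp add: L2_norm_sq_def norm_divide w_norm)
  ultimately have "L2_02pi (\<lambda>t. f t / w t)"
    using w_meas by (simp add: L2_02pi_iff)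
  then obtain F c where "finite F"
    and approx: "L2_norm_sq lebesgue_02pi (\<lambda>t. f t / w t - (\<Sum>n\<in>F. c n * \<phi> n t)) < ennreal e"
    using dense \<open>0 < e\<close> unfolding L2_dense_span_def by blast
  have "f t - (\<Sum>n\<in>F. c n * (w t * \<phi> n t)) = w t * (f t / w t - (\<Sum>n\<in>F. c n * \<phi> n t))" for t
    using w_norm[of t] by (auto simp: field_simps sum_distrib_left)
  then have "L2_norm_sq lebesgue_02pi (\<lambda>t. f t - (\<Sum>n\<in>F. c n * (w t * \<phi> n t)))
      = L2_norm_sq lebesgue_02pi (\<lambda>t. w t * (f t / w t - (\<Sum>n\<in>F. c n * \<phi> n t)))"
    by simp
  also have "\<dots> = L2_norm_sq lebesgue_02pi (\<lambda>t. f t / w t - (\<Sum>n\<in>F. c n * \<phi> n t))"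
    by (rule L2_norm_sq_unimodular_mult[OF w_norm])
  finally have "L2_norm_sq lebesgue_02pi (\<lambda>t. f t - (\<Sum>n\<in>F. c n * (w t * \<phi> n t)))
      = L2_norm_sq lebesgue_02pi (\<lambda>t. f t / w t - (\<Sum>n\<in>F. c n * \<phi> n t))" .
  then show "\<exists>F c. finite F \<and> L2_norm_sq lebesgue_02pi (\<lambda>t. f t - (\<Sum>n\<in>F. c n * (w t * \<phi> n t))) < ennreal e"
    using \<open>finite F\<close> approx by (intro exI[of _ F] exI[of _ c]) simp
qed

lemma L2_02pi_reflection_equation_solvable:
  fixes s :: complex
  assumes "L2_02pi f" and "s\<^sup>2 \<noteq> 1"
  obtains g where "L2_02pi g" "\<And>t. f t = g t + s * g (2*pi - t)"
proof -
  have f_meas [measurable]: "f \<in> borel_measurable lebesgue_02pi"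
    and f_fin: "L2_norm_sq lebesgue_02pi f < \<infinity>"
    using assms(1) by (auto simp: L2_02pi_iff)
  have [measurable]: "(\<lambda>t. f (2*pi - t)) \<in> borel_measurable lebesgue_02pi"
    by (rule measurable_reflect_02pi[OF f_meas])
  define a where "a = 1 / (1 - s\<^sup>2)"
  define b where "b = - s / (1 - s\<^sup>2)"
  define g where "g t = a * f t + b * f (2*pi - t)" for t
  have f_eq: "f t = g t + s * g (2*pi - t)" for t
  proof -
    have "g t + s * g (2*pi - t) = (a + s * b) * f t + (b + s * a) * f (2*pi - t)"
      by (simp add: g_def algebra_simps)
    moreover have "a + s * b = 1" "b + s * a = 0"
      using \<open>s\<^sup>2 \<noteq> 1\<close> by (simp_all add: a_def b_def divide_simps power2_eq_square)
    ultimately show ?thesis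
      by simp
  qed
  have "L2_norm_sq lebesgue_02pi g
      \<le> 2 * L2_norm_sq lebesgue_02pi (\<lambda>t. a * f t) + 2 * L2_norm_sq lebesgue_02pi (\<lambda>t. b * f (2*pi - t))"
    unfolding g_def by (rule L2_norm_sq_add_le) measurable
  also have "\<dots> < \<infinity>"
    using f_fin by (simp add: L2_norm_sq_cmult L2_norm_sq_reflect_02pi ennreal_mult_less_top)
  finally have "L2_norm_sq lebesgue_02pi g < \<infinity>" .
  moreover have "g \<in> borel_measurable lebesgue_02pi"
    unfolding g_def by measurable
  ultimately have "L2_02pi g"
    by (simp add: L2_02pi_iff)
  then show ?thesis
    using f_eq by (rule that)
qed

lemma L2_dense_span_reflect:
  assumes dense: "L2_dense_span u" and u_meas: "\<And>n. u n \<in> borel_measurable lebesgue_02pi"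
    and "norm s = 1" "s\<^sup>2 \<noteq> 1" "k \<noteq> 0"
  shows "L2_dense_span (\<lambda>n t. (u n t + s * u n (2*pi - t)) / k)"
  unfolding L2_dense_span_def
proof (intro allI impI)
  fix f :: "real \<Rightarrow> complex" and e :: real
  assume "L2_02pi f" "0 < e"
  then obtain g where "L2_02pi g" and f_eq: "\<And>t. f t = g t + s * g (2*pi - t)"
    using L2_02pi_reflection_equation_solvable \<open>s\<^sup>2 \<noteq> 1\<close> by blast
  then obtain F c where "finite F"
    and approx: "L2_norm_sq lebesgue_02pi (\<lambda>t. g t - (\<Sum>n\<in>F. c n * u n t)) < ennreal (e/4)"
    using dense \<open>0 < e\<close> unfolding L2_dense_span_def by (meson divide_pos_pos zero_less_numeral)
  define r where "r = (\<lambda>t. g t - (\<Sum>n\<in>F. c n * u n t))"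
  have [measurable]: "g \<in> borel_measurable lebesgue_02pi"
    using \<open>L2_02pi g\<close> by (simp add: L2_02pi_iff)
  note [measurable] = u_meas
  have r_meas: "r \<in> borel_measurable lebesgue_02pi"
    unfolding r_def by measurable
  have "f t - (\<Sum>n\<in>F. (k * c n) * ((u n t + s * u n (2*pi - t)) / k)) = r t + s * r (2*pi - t)" for t
  proof -
    have "(k * c n) * ((u n t + s * u n (2*pi - t)) / k) = c n * u n t + s * (c n * u n (2*pi - t))" for n
      using \<open>k \<noteq> 0\<close> by (simp add: field_simps)
    then show ?thesis
      by (simp add: f_eq r_def sum.distrib sum_distrib_left algebra_simps)
  qed
  moreover have "L2_norm_sq lebesgue_02pi (\<lambda>t. r t + s * r (2*pi - t)) < ennreal e"
  proof (rule L2_norm_sq_add_less)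
    show "L2_norm_sq lebesgue_02pi r < ennreal (e/4)"
      using approx by (simp add: r_def)
    have "L2_norm_sq lebesgue_02pi (\<lambda>t. s * r (2*pi - t)) = L2_norm_sq lebesgue_02pi (\<lambda>t. r (2*pi - t))"
      using \<open>norm s = 1\<close> by (rule L2_norm_sq_unimodular_mult)
    also have "\<dots> = L2_norm_sq lebesgue_02pi r"
      by (rule L2_norm_sq_reflect_02pi[OF r_meas])
    finally show "L2_norm_sq lebesgue_02pi (\<lambda>t. s * r (2*pi - t)) < ennreal (e/4)"
      using \<open>L2_norm_sq lebesgue_02pi r < ennreal (e/4)\<close> by simp
  qed (use r_meas measurable_reflect_02pi[OF r_meas] in auto)
  ultimately show "\<exists>F c. finite F \<and> L2_norm_sq lebesgue_02pi
      (\<lambda>t. f t - (\<Sum>n\<in>F. c n * ((u n t + s * u n (2*pi - t)) / k))) < ennreal e"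
    using \<open>finite F\<close> by (intro exI[of _ F] exI[of _ "\<lambda>n. k * c n"]) simp
qed

lemma complete_L2_02pi_if_dense_span:
  assumes dense: "L2_dense_span \<phi>" and \<phi>_meas: "\<And>n. \<phi> n \<in> borel_measurable lebesgue_02pi"
  shows "complete_L2_02pi \<phi>"
  unfolding complete_L2_02pi_def
proof (intro allI impI)
  fix f :: "real \<Rightarrow> complex" and e :: real
  assume "L2_02pi f" "0 < e"
  then obtain F c where "finite F"
    and approx: "L2_norm_sq lebesgue_02pi (\<lambda>t. f t - (\<Sum>n\<in>F. c n * \<phi> n t)) < ennreal e"
    using dense unfolding L2_dense_span_def by blast
  have [measurable]: "f \<in> borel_measurable lebesgue_02pi"
    using \<open>L2_02pi f\<close> by (simp add: L2_02pi_iff)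
  note [measurable] = \<phi>_meas
  have "(\<lambda>t. f t - (\<Sum>n\<in>F. c n * \<phi> n t)) \<in> borel_measurable lebesgue_02pi"
    by measurable
  then have "(\<integral>t. (norm (f t - (\<Sum>n\<in>F. c n * \<phi> n t)))\<^sup>2 \<partial>lebesgue_02pi)
      = enn2real (L2_norm_sq lebesgue_02pi (\<lambda>t. f t - (\<Sum>n\<in>F. c n * \<phi> n t)))"
    unfolding L2_norm_sq_def by (intro integral_eq_nn_integral) auto
  also have "\<dots> < e"
    using approx \<open>0 < e\<close> by (simp add: order.strict_trans[OF approx])
  finally show "\<exists>F c. finite F \<and> (\<integral>t. (norm (f t - (\<Sum>n\<in>F. c n * \<phi> n t)))\<^sup>2 \<partial>lebesgue_02pi) < e"
    using \<open>finite F\<close> by blast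
qed

lemma cis_2pi_mult_eq_1_iff: "cis (2 * pi * x) = 1 \<longleftrightarrow> x \<in> \<int>"
proof
  assume "cis (2 * pi * x) = 1"
  then have "cos (2 * pi * x) = 1"
    by (simp add: complex_eq_iff)
  then obtain n :: int where "2 * pi * x = of_int n * 2 * pi"
    by (auto simp: cos_one_2pi_int)
  then show "x \<in> \<int>"
    by (simp add: Ints_def)
qed simp

lemma L2_dense_span_cis_shift: "L2_dense_span (\<lambda>n t. cis ((of_int n + \<beta>) * t))"
proof -
  have "L2_dense_span (\<lambda>n t. cis (\<beta> * t) * cis (of_int n * t))"
    by (simp add: L2_dense_span_unimodular_mult L2_dense_span_cis continuous_imp_measurable_02pi continuous_on_cis)
  moreover have "(\<lambda>n t. cis (\<beta> * t) * cis (of_int n * t)) = (\<lambda>n t. cis ((of_int n + \<beta>) * t))"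
    by (simp add: fun_eq_iff cis_mult algebra_simps)
  ultimately show ?thesis
    by simp
qed

lemma complete_L2_02pi_cis_shift_reflect:
  assumes "norm s = 1" "s\<^sup>2 \<noteq> 1" "k \<noteq> 0"
  shows "complete_L2_02pi (\<lambda>n t. (cis ((of_int n + \<beta>) * t) + s * cis ((of_int n + \<beta>) * (2*pi - t))) / k)"
proof (rule complete_L2_02pi_if_dense_span)
  show "L2_dense_span (\<lambda>n t. (cis ((of_int n + \<beta>) * t) + s * cis ((of_int n + \<beta>) * (2*pi - t))) / k)"
    by (rule L2_dense_span_reflect[OF L2_dense_span_cis_shift _ assms])
      (intro continuous_imp_measurable_02pi continuous_intros)
  have "continuous_on UNIV (\<lambda>t. cis ((of_int n + \<beta>) * t) + s * cis ((of_int n + \<beta>) * (2*pi - t)))" for n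
    by (intro continuous_intros)
  then show "(\<lambda>t. (cis ((of_int n + \<beta>) * t) + s * cis ((of_int n + \<beta>) * (2*pi - t))) / k)
      \<in> borel_measurable lebesgue_02pi" for n
    using continuous_imp_measurable_02pi by measurable
qed

lemma of_real_sin_eq_cis: "complex_of_real (sin x) = (cis x - cis (- x)) / (2 * \<i>)"
  by (simp add: complex_eq_iff)

lemma of_real_cos_eq_cis: "complex_of_real (cos x) = (cis x + cis (- x)) / 2"
  by (simp add: complex_eq_iff)

lemma cis_reflect_2pi: "cis (- 2 * pi * \<beta>) * cis ((of_int n + \<beta>) * (2*pi - t)) = cis (- ((of_int n + \<beta>) * t))"
proof -
  have "cis (- 2 * pi * \<beta>) * cis ((of_int n + \<beta>) * (2*pi - t)) = cis (2 * pi * of_int n) * cis (- ((of_int n + \<beta>) * t))"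
    by (simp add: cis_mult algebra_simps)
  then show ?thesis
    by simp
qed

theorem lemma3:
  fixes \<beta> :: real
  assumes "0 < \<beta>" and "\<beta> < 1/2"
  shows "complete_L2_02pi (\<lambda>n t. complex_of_real (sin ((of_int n + \<beta>) * t)))
       \<and> complete_L2_02pi (\<lambda>n t. complex_of_real (cos ((of_int n + \<beta>) * t)))"
proof -
  define d where "d = cis (- 2 * pi * \<beta>)"
  have "- 2 * \<beta> \<notin> \<int>"
    using assms Ints_nonzero_abs_less1[of "- 2 * \<beta>"] by auto
  moreover have "d\<^sup>2 = cis (2 * pi * (- 2 * \<beta>))"
    by (simp add: d_def power2_eq_square cis_mult)
  ultimately have "d\<^sup>2 \<noteq> 1"
    by (metis cis_2pi_mult_eq_1_iff)
  have "norm d = 1"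
    by (simp add: d_def)
  have reflect: "d * cis ((of_int n + \<beta>) * (2*pi - t)) = cis (- ((of_int n + \<beta>) * t))" for n t
    unfolding d_def by (rule cis_reflect_2pi)
  have "complete_L2_02pi (\<lambda>n t. (cis ((of_int n + \<beta>) * t) + (- d) * cis ((of_int n + \<beta>) * (2*pi - t))) / (2 * \<i>))"
    using \<open>d\<^sup>2 \<noteq> 1\<close> \<open>norm d = 1\<close> by (intro complete_L2_02pi_cis_shift_reflect) simp_all
  moreover have "complete_L2_02pi (\<lambda>n t. (cis ((of_int n + \<beta>) * t) + d * cis ((of_int n + \<beta>) * (2*pi - t))) / 2)"
    using \<open>d\<^sup>2 \<noteq> 1\<close> \<open>norm d = 1\<close> by (intro complete_L2_02pi_cis_shift_reflect) simp_all
  ultimately show ?thesis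
    by (simp add: reflect of_real_sin_eq_cis of_real_cos_eq_cis)
qed

end
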